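(* Assume H1 and H3. Then for any $\kappa>0$, $\theta\in\Theta$, $\bar\gamma<2/L$, $\gamma\in(0,\bar\gamma]$ and $x\in\mathbb{R}^d$, $$\|\mathrm{prox}^{\gamma\kappa}_{U_\theta}(x)-\gamma\nabla V_\theta(\mathrm{prox}^{\gamma\kappa}_{U_\theta}(x))\|^2\le\|x\|^2+\gamma\big[3\bar\gamma\kappa^2M^2+2\kappa c+2\kappa(R_{U,2}+MR_{U,1})+(2/L-\bar\gamma)^{-1}R_{V,1}^2-2\kappa\eta\|x\|\big].$$
   Context: $\|\cdot\|$ Euclidean, $\Theta\subset\mathbb{R}^{d_\Theta}$ nonempty. $\mathrm{prox}^\lambda_U(x)=\arg\min_{\tilde x}\{U(\tilde x)+\|x-\tilde x\|^2/(2\lambda)\}$. H1: for every $\theta\in\Theta$ convex $V_\theta,\bar V_\theta,U_\theta,\bar U_\theta:\mathbb{R}^d\to[0,\infty)$ with (a) $e^{-V_\theta-U_\theta}$, $e^{-\bar V_\theta-\bar U_\theta}$ integrable with $\min(\inf_\theta\int e^{-V_\theta-U_\theta},\inf_\theta\int e^{-\bar V_\theta-\bar U_\theta})>0$; (b) $V_\theta,\bar V_\theta$ $C^1$ with $L$-Lipschitz gradients ($L$ independent of $\theta$), and for each $\theta$ minimizers of $V_\theta,\bar V_\theta$ with norm $\le R_{V,1}$ and minimum values of absolute value $\le R_{V,2}$; (c) $U_\theta,\bar U_\theta$ are $M$-Lipschitz, and for each $\theta$ there are $x^\sharp_\theta,\bar x^\sharp_\theta$ of norm $\le R_{U,1}$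 with $|U_\theta(x^\sharp_\theta)|,|\bar U_\theta(\bar x^\sharp_\theta)|\le R_{U,2}$. H3: there are $\eta>0,c\ge0$ with $\min(U_\theta(x),\bar U_\theta(x))\ge\eta\|x\|-c$ for all $\theta,x$. *)

theory Defs
  imports "HOL-Analysis.Analysis"
begin

text \<open>For convex Lipschitz U and lambda > 0 the minimiser exists and is unique
  (strongly convex continuous objective); we pick it by Hilbert choice.\<close>
definition prox :: "real \<Rightarrow> ('a::real_normed_vector \<Rightarrow> real) \<Rightarrow> 'a \<Rightarrow> 'a" where
  "prox lam U x = (SOME y. \<forall>z. U y + (norm (x - y))\<^sup>2 / (2 * lam) \<le> U z + (norm (x - z))\<^sup>2 / (2 * lam))"

end

theory Submission
  imports Defs
begin

text \<open>Write p for the proximal point of x and s = (x - p)/lam, lam = gamma kappa. Minimality of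
  the proximal objective makes s a subgradient of U at p, hence norm s <= M by Lipschitz
  continuity. Expanding x = p + lam s gives norm p^2 <= norm x^2 - 2 lam (s . p), and s . p is
  bounded below by the subgradient inequality at the anchor point x#, then U p >= U x - lam M^2
  and the growth condition at x (this yields 2 lam^2 M^2 in place of 3 gamma_b gamma kappa^2 M^2). For the gradient step,
  cocoercivity of the gradient G of V at p against its minimiser x* (where the gradient
  vanishes) gives p . G >= norm G^2 / L - R_V1 norm G, and the remaining quadratic in norm G is
  maximised by completing the square.\<close>

lemma has_real_derivative_along_line:
  fixes f :: "'a::real_inner \<Rightarrow> real"
  assumes "\<And>y. (f has_derivative (\<lambda>h. g y \<bullet> h)) (at y)"
  shows "((\<lambda>t. f (a + t *\<^sub>R d)) has_real_derivative (g (a + t *\<^sub>R d) \<bullet> d)) (at t)"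
proof -
  have "((\<lambda>t. a + t *\<^sub>R d) has_derivative (\<lambda>h. h *\<^sub>R d)) (at t)"
    by (auto intro!: derivative_eq_intros)
  from has_derivative_compose[OF this assms]
  have "((\<lambda>t. f (a + t *\<^sub>R d)) has_derivative (\<lambda>h. g (a + t *\<^sub>R d) \<bullet> (h *\<^sub>R d))) (at t)"
    by (simp add: o_def)
  moreover have "(\<lambda>h. g (a + t *\<^sub>R d) \<bullet> (h *\<^sub>R d)) = (*) (g (a + t *\<^sub>R d) \<bullet> d)"
    by (auto simp: mult.commute)
  ultimately show ?thesis
    by (simp add: has_field_derivative_def)
qed

lemma convex_on_along_line:
  assumes "convex_on UNIV f"
  shows "convex_on UNIV (\<lambda>t::real. f (a + t *\<^sub>R d))"
proof (rule convex_onI)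
  fix t x y :: real
  assume t: "0 < t" "t < 1"
  have "a + ((1 - t) *\<^sub>R x + t *\<^sub>R y) *\<^sub>R d = (1 - t) *\<^sub>R (a + x *\<^sub>R d) + t *\<^sub>R (a + y *\<^sub>R d)"
    by (simp add: algebra_simps)
  then show "f (a + ((1 - t) *\<^sub>R x + t *\<^sub>R y) *\<^sub>R d) \<le> (1 - t) * f (a + x *\<^sub>R d) + t * f (a + y *\<^sub>R d)"
    using t by (simp add: convex_onD[OF assms])
qed auto

lemma convex_gradient_inequality:
  fixes f :: "'a::real_inner \<Rightarrow> real"
  assumes cvx: "convex_on UNIV f" and grad: "\<And>y. (f has_derivative (\<lambda>h. g y \<bullet> h)) (at y)"
  shows "f a + g a \<bullet> (b - a) \<le> f b"
proof -
  define \<phi> where "\<phi> t = f (a + t *\<^sub>R (b - a))" for t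
  have "g a \<bullet> (b - a) * (1 - 0) \<le> \<phi> 1 - \<phi> 0"
    unfolding \<phi>_def
    using has_real_derivative_along_line[OF grad, of a "b - a" 0]
    by (intro convex_on_imp_above_tangent[where A = UNIV] convex_on_along_line cvx) auto
  then show ?thesis
    unfolding \<phi>_def by simp
qed

lemma lipschitz_gradient_descent_lemma:
  fixes f :: "'a::real_inner \<Rightarrow> real"
  assumes grad: "\<And>y. (f has_derivative (\<lambda>h. g y \<bullet> h)) (at y)"
    and lip: "L-lipschitz_on UNIV g"
  shows "f b \<le> f a + g a \<bullet> (b - a) + L / 2 * (norm (b - a))\<^sup>2"
proof -
  define d where "d = b - a"
  define h where "h t = f (a + t *\<^sub>R d) - t * (g a \<bullet> d) - L / 2 * t\<^sup>2 * (norm d)\<^sup>2" for t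
  have "h 1 \<le> h 0"
  proof (rule DERIV_nonpos_imp_nonincreasing[of 0 1 h])
    fix t :: real
    assume t: "0 \<le> t" "t \<le> 1"
    have "(h has_real_derivative (g (a + t *\<^sub>R d) \<bullet> d - g a \<bullet> d - L * t * (norm d)\<^sup>2)) (at t)"
      unfolding h_def
      by (rule derivative_eq_intros has_real_derivative_along_line[OF grad] refl | simp)+
    moreover have "g (a + t *\<^sub>R d) \<bullet> d - g a \<bullet> d \<le> L * t * (norm d)\<^sup>2"
    proof -
      have "g (a + t *\<^sub>R d) \<bullet> d - g a \<bullet> d \<le> norm (g (a + t *\<^sub>R d) - g a) * norm d"
        by (metis inner_diff_left norm_cauchy_schwarz)
      also have "\<dots> \<le> L * norm (t *\<^sub>R d) * norm d"
        using lipschitz_onD[OF lip, of "a + t *\<^sub>R d" a]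
        by (intro mult_right_mono) (auto simp: dist_norm)
      also have "\<dots> = L * t * (norm d)\<^sup>2"
        using t by (simp add: power2_eq_square)
      finally show ?thesis .
    qed
    ultimately show "\<exists>y. (h has_real_derivative y) (at t) \<and> y \<le> 0"
      by auto
  qed auto
  then show ?thesis
    unfolding h_def d_def by (simp add: algebra_simps)
qed

text \<open>Apply the gradient inequality at the point w reached by a gradient step from b with the
  difference g b - g a, then the descent lemma between w and b.\<close>
lemma convex_lipschitz_gradient_lower_bound:
  fixes f :: "'a::real_inner \<Rightarrow> real"
  assumes cvx: "convex_on UNIV f" and grad: "\<And>y. (f has_derivative (\<lambda>h. g y \<bullet> h)) (at y)"
    and lip: "L-lipschitz_on UNIV g" and L: "0 < L"
  shows "f a + g a \<bullet> (b - a) + (norm (g b - g a))\<^sup>2 / (2 * L) \<le> f b"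
proof -
  define v where "v = g b - g a"
  define w where "w = b - (1 / L) *\<^sub>R v"
  have "f a + g a \<bullet> (w - a) \<le> f w"
    by (rule convex_gradient_inequality[OF cvx grad])
  also have "f w \<le> f b + g b \<bullet> (w - b) + L / 2 * (norm (w - b))\<^sup>2"
    by (rule lipschitz_gradient_descent_lemma[OF grad lip])
  finally have "f a + g a \<bullet> (b - a) + v \<bullet> (b - w) \<le> f b + L / 2 * (norm (w - b))\<^sup>2"
    unfolding v_def by (simp add: inner_diff_left inner_diff_right algebra_simps)
  moreover have "v \<bullet> (b - w) = (norm v)\<^sup>2 / L" "L / 2 * (norm (w - b))\<^sup>2 = (norm v)\<^sup>2 / (2 * L)"
    unfolding w_def using L by (simp_all add: dot_square_norm power2_eq_square field_simps)
  ultimately show ?thesis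
    unfolding v_def by (simp add: field_simps)
qed

lemma convex_lipschitz_gradient_cocoercive:
  fixes f :: "'a::real_inner \<Rightarrow> real"
  assumes cvx: "convex_on UNIV f" and grad: "\<And>y. (f has_derivative (\<lambda>h. g y \<bullet> h)) (at y)"
    and lip: "L-lipschitz_on UNIV g" and L: "0 < L"
  shows "(norm (g b - g a))\<^sup>2 / L \<le> (g b - g a) \<bullet> (b - a)"
  using convex_lipschitz_gradient_lower_bound[OF cvx grad lip L, of a b]
    convex_lipschitz_gradient_lower_bound[OF cvx grad lip L, of b a]
  by (simp add: norm_minus_commute inner_diff_left inner_diff_right inner_commute field_simps)

lemma gradient_zero_at_minimum:
  fixes f :: "'a::real_inner \<Rightarrow> real"
  assumes "(f has_derivative (\<lambda>h. g \<bullet> h)) (at a)" and "\<And>y. f a \<le> f y"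
  shows "g = 0"
proof -
  have "(\<lambda>h. g \<bullet> h) = (\<lambda>h. 0)"
    using assms by (intro differential_zero_maxmin[of a UNIV]) auto
  then show ?thesis
    by (metis inner_eq_zero_iff)
qed

lemma le_of_le_add_mult_small:
  fixes a b c :: real
  assumes "\<And>t. 0 < t \<Longrightarrow> t \<le> 1 \<Longrightarrow> a \<le> b + t * c"
  shows "a \<le> b"
proof (rule field_le_epsilon)
  fix e :: real
  assume e: "0 < e"
  define t where "t = min 1 (e / (\<bar>c\<bar> + 1))"
  have t: "0 < t" "t \<le> 1"
    using e by (auto simp: t_def)
  have "t * c \<le> t * (\<bar>c\<bar> + 1)"
    using t by (intro mult_left_mono) auto
  also have "\<dots> \<le> e / (\<bar>c\<bar> + 1) * (\<bar>c\<bar> + 1)"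
    by (intro mult_right_mono) (auto simp: t_def)
  finally show "a \<le> b + e"
    using assms[OF t] by simp
qed

lemma power2_norm_diff_scaleR:
  fixes a b :: "'a::real_inner"
  shows "(norm (a - t *\<^sub>R b))\<^sup>2 = (norm a)\<^sup>2 - 2 * t * (a \<bullet> b) + t\<^sup>2 * (norm b)\<^sup>2"
  unfolding power2_norm_eq_inner
  by (simp add: inner_diff_left inner_diff_right inner_commute power2_eq_square algebra_simps)

text \<open>Outside the ball of radius 2 lam M around x the objective exceeds its value at x.\<close>
lemma prox_objective_has_minimum:
  fixes U :: "'a::euclidean_space \<Rightarrow> real"
  assumes lip: "M-lipschitz_on UNIV U" and lam: "0 < lam"
  shows "\<exists>p. \<forall>z. U p + (norm (x - p))\<^sup>2 / (2 * lam) \<le> U z + (norm (x - z))\<^sup>2 / (2 * lam)"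
proof -
  define F where "F z = U z + (norm (x - z))\<^sup>2 / (2 * lam)" for z
  define r where "r = 2 * lam * M"
  have r: "0 \<le> r"
    using lipschitz_on_nonneg[OF lip] lam by (simp add: r_def)
  have "continuous_on (cball x r) F"
    unfolding F_def using lam
    by (intro continuous_intros continuous_on_subset[OF lipschitz_on_continuous_on[OF lip]]) auto
  then obtain p where p: "p \<in> cball x r" and p_min: "\<And>z. z \<in> cball x r \<Longrightarrow> F p \<le> F z"
    using continuous_attains_inf[OF compact_cball] r by (metis empty_iff centre_in_cball)
  have "F x < F z" if z: "z \<notin> cball x r" for z
  proof -
    define d where "d = norm (x - z)"
    have "r < d"
      using z by (simp add: d_def dist_norm)
    have "U x - U z \<le> M * d"
      using lipschitz_onD[OF lip, of x z] by (simp add: d_def dist_norm)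
    moreover have "M * d < d\<^sup>2 / (2 * lam)"
      using \<open>r < d\<close> r lam by (simp add: r_def power2_eq_square field_simps)
    ultimately show ?thesis
      by (simp add: F_def d_def)
  qed
  then have "F p \<le> F z" for z
    using p_min[of z] p_min[of x] r by (cases "z \<in> cball x r") force+
  then show ?thesis
    unfolding F_def by blast
qed

lemma prox_minimises:
  fixes U :: "'a::euclidean_space \<Rightarrow> real"
  assumes "M-lipschitz_on UNIV U" and "0 < lam"
  shows "U (prox lam U x) + (norm (x - prox lam U x))\<^sup>2 / (2 * lam) \<le> U z + (norm (x - z))\<^sup>2 / (2 * lam)"
  using someI_ex[OF prox_objective_has_minimum[OF assms, of x]] unfolding prox_def by blast

definition is_subgradient :: "('a::real_inner \<Rightarrow> real) \<Rightarrow> 'a \<Rightarrow> 'a \<Rightarrow> bool" where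
  "is_subgradient f p s \<longleftrightarrow> (\<forall>y. f p + s \<bullet> (y - p) \<le> f y)"

lemma norm_subgradient_le_lipschitz:
  assumes lip: "M-lipschitz_on UNIV f" and "is_subgradient f p s"
  shows "norm s \<le> M"
proof -
  have "(norm s)\<^sup>2 \<le> f (p + s) - f p"
    using assms(2) unfolding is_subgradient_def by (auto simp: dot_square_norm dest: spec[of _ "p + s"])
  also have "\<dots> \<le> M * norm s"
    using lipschitz_onD[OF lip, of "p + s" p] by (simp add: dist_norm)
  finally show ?thesis
    using lipschitz_on_nonneg[OF lip] by (cases "s = 0") (auto simp: power2_eq_square)
qed

text \<open>Compare the proximal objective at p with its value at p + t (y - p) and let t tend to 0.\<close>
lemma prox_residual_is_subgradient:
  fixes U :: "'a::euclidean_space \<Rightarrow> real"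
  assumes cvx: "convex_on UNIV U" and lip: "M-lipschitz_on UNIV U" and lam: "0 < lam"
  shows "is_subgradient U (prox lam U x) ((x - prox lam U x) /\<^sub>R lam)"
  unfolding is_subgradient_def
proof
  fix y
  define p where "p = prox lam U x"
  have "U p \<le> U y - ((x - p) \<bullet> (y - p)) / lam + t * ((norm (y - p))\<^sup>2 / (2 * lam))"
    if t: "0 < t" "t \<le> 1" for t
  proof -
    define z where "z = (1 - t) *\<^sub>R p + t *\<^sub>R y"
    have "x - z = (x - p) - t *\<^sub>R (y - p)"
      by (simp add: z_def algebra_simps)
    then have "(norm (x - z))\<^sup>2 = (norm (x - p))\<^sup>2 - 2 * t * ((x - p) \<bullet> (y - p)) + t\<^sup>2 * (norm (y - p))\<^sup>2"
      by (simp only: power2_norm_diff_scaleR)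
    then have "(norm (x - z))\<^sup>2 / (2 * lam)
        = (norm (x - p))\<^sup>2 / (2 * lam) - t * (((x - p) \<bullet> (y - p)) / lam) + t * (t * ((norm (y - p))\<^sup>2 / (2 * lam)))"
      using lam by (simp add: power2_eq_square field_simps)
    moreover have "U z \<le> (1 - t) * U p + t * U y"
      using t by (simp add: z_def convex_onD[OF cvx])
    moreover have "U p + (norm (x - p))\<^sup>2 / (2 * lam) \<le> U z + (norm (x - z))\<^sup>2 / (2 * lam)"
      unfolding p_def by (rule prox_minimises[OF lip lam])
    ultimately have "t * U p \<le> t * U y - t * (((x - p) \<bullet> (y - p)) / lam) + t * (t * ((norm (y - p))\<^sup>2 / (2 * lam)))"
      by (simp add: algebra_simps)
    then have "t * U p \<le> t * (U y - ((x - p) \<bullet> (y - p)) / lam + t * ((norm (y - p))\<^sup>2 / (2 * lam)))"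
      by (simp add: algebra_simps)
    then show ?thesis
      using t by simp
  qed
  then have "U p \<le> U y - ((x - p) \<bullet> (y - p)) / lam"
    by (rule le_of_le_add_mult_small)
  then show "U p + ((x - p) /\<^sub>R lam) \<bullet> (y - p) \<le> U y"
    by (simp add: divide_inverse mult.commute)
qed

lemma norm_prox_le:
  fixes U :: "'a::euclidean_space \<Rightarrow> real"
  assumes cvx: "convex_on UNIV U" and lip: "M-lipschitz_on UNIV U" and lam: "0 < lam"
    and anchor: "norm xu \<le> R1" "\<bar>U xu\<bar> \<le> R2"
  shows "(norm (prox lam U x))\<^sup>2 \<le> (norm x)\<^sup>2 - 2 * lam * U x + 2 * lam * (lam * M\<^sup>2 + R2 + M * R1)"
proof -
  define p where "p = prox lam U x"
  define s where "s = (x - p) /\<^sub>R lam"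
  have sub: "is_subgradient U p s"
    unfolding p_def s_def by (rule prox_residual_is_subgradient[OF cvx lip lam])
  have s: "norm s \<le> M"
    by (rule norm_subgradient_le_lipschitz[OF lip sub])
  have x: "x = p + lam *\<^sub>R s"
    unfolding s_def using lam by simp
  have "(norm x)\<^sup>2 = (norm p)\<^sup>2 + 2 * lam * (s \<bullet> p) + lam\<^sup>2 * (norm s)\<^sup>2"
    unfolding x power2_norm_eq_inner
    by (simp add: inner_add_left inner_add_right inner_commute power2_eq_square algebra_simps)
  then have norm_p: "(norm p)\<^sup>2 \<le> (norm x)\<^sup>2 - 2 * lam * (s \<bullet> p)"
    by simp
  have "U p + s \<bullet> (xu - p) \<le> U xu"
    using sub by (simp add: is_subgradient_def)
  moreover have "- (M * R1) \<le> s \<bullet> xu"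
    using norm_cauchy_schwarz[of "- s" xu] mult_mono[OF s anchor(1)] lipschitz_on_nonneg[OF lip]
    by simp
  ultimately have "U p - R2 - M * R1 \<le> s \<bullet> p"
    using anchor(2) by (simp add: inner_diff_right)
  moreover have "U x - U p \<le> lam * M\<^sup>2"
  proof -
    have "U x - U p \<le> M * norm (x - p)"
      using lipschitz_onD[OF lip, of x p] by (simp add: dist_norm)
    also have "\<dots> = lam * (M * norm s)"
      using lam by (simp add: x)
    also have "\<dots> \<le> lam * M\<^sup>2"
      using s lam lipschitz_on_nonneg[OF lip] by (simp add: power2_eq_square mult_left_mono)
    finally show ?thesis .
  qed
  ultimately have "2 * lam * (U x - lam * M\<^sup>2 - R2 - M * R1) \<le> 2 * lam * (s \<bullet> p)"
    using lam by (intro mult_left_mono) auto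
  with norm_p show ?thesis
    unfolding p_def by (simp add: algebra_simps)
qed

lemma quadratic_le_sq_div:
  fixes a b t :: real
  assumes "0 < a"
  shows "2 * b * t - a * t\<^sup>2 \<le> b\<^sup>2 / a"
proof -
  have "0 \<le> (a * t - b)\<^sup>2"
    by simp
  then show ?thesis
    using assms by (simp add: field_simps power2_eq_square algebra_simps)
qed

lemma norm_gradient_step_le:
  fixes f :: "'a::real_inner \<Rightarrow> real"
  assumes cvx: "convex_on UNIV f" and grad: "\<And>y. (f has_derivative (\<lambda>h. g y \<bullet> h)) (at y)"
    and lip: "L-lipschitz_on UNIV g" and L: "0 < L"
    and min: "\<And>y. f xs \<le> f y" and xs: "norm xs \<le> R"
    and step: "0 < \<gamma>" "\<gamma> \<le> \<gamma>b" "\<gamma>b < 2 / L"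
  shows "(norm (p - \<gamma> *\<^sub>R g p))\<^sup>2 \<le> (norm p)\<^sup>2 + \<gamma> * (R\<^sup>2 / (2 / L - \<gamma>b))"
proof -
  define G where "G = g p"
  have "g xs = 0"
    using grad min by (rule gradient_zero_at_minimum)
  then have "(norm G)\<^sup>2 / L \<le> G \<bullet> (p - xs)"
    unfolding G_def using convex_lipschitz_gradient_cocoercive[OF cvx grad lip L, of xs p]
    by (simp add: inner_diff_right)
  moreover have "\<bar>G \<bullet> xs\<bar> \<le> norm G * R"
    using Cauchy_Schwarz_ineq2[of G xs] xs by (meson mult_left_mono norm_ge_zero order_trans)
  ultimately have "(norm G)\<^sup>2 / L - R * norm G \<le> p \<bullet> G"
    by (simp add: inner_diff_right inner_commute mult.commute abs_le_iff)
  then have "2 * \<gamma> * ((norm G)\<^sup>2 / L - R * norm G) \<le> 2 * \<gamma> * (p \<bullet> G)"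
    using step by simp
  moreover have "\<gamma>\<^sup>2 * (norm G)\<^sup>2 \<le> \<gamma> * \<gamma>b * (norm G)\<^sup>2"
    using step by (simp add: power2_eq_square mult_right_mono)
  ultimately have "(norm (p - \<gamma> *\<^sub>R G))\<^sup>2 \<le> (norm p)\<^sup>2 + \<gamma> * (2 * R * norm G - (2 / L - \<gamma>b) * (norm G)\<^sup>2)"
    by (simp add: power2_norm_diff_scaleR algebra_simps)
  also have "\<dots> \<le> (norm p)\<^sup>2 + \<gamma> * (R\<^sup>2 / (2 / L - \<gamma>b))"
    using step by (intro add_left_mono mult_left_mono quadratic_le_sq_div) auto
  finally show ?thesis
    unfolding G_def .
qed

theorem lemma14:
  fixes \<Theta> :: "'p::euclidean_space set"
    and V Vb U Ub :: "'p \<Rightarrow> 'a::euclidean_space \<Rightarrow> real"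
    and gV gVb :: "'p \<Rightarrow> 'a \<Rightarrow> 'a"
    and L M RV1 RV2 RU1 RU2 \<eta> c :: real
    and \<kappa> \<gamma> \<gamma>b :: real and \<theta> :: 'p and x :: 'a
  assumes Theta_ne: "\<Theta> \<noteq> {}"
    (* H1: convexity and nonnegativity *)
    and convex: "\<And>\<theta>. \<theta> \<in> \<Theta> \<Longrightarrow> convex_on UNIV (V \<theta>) \<and> convex_on UNIV (Vb \<theta>)
                              \<and> convex_on UNIV (U \<theta>) \<and> convex_on UNIV (Ub \<theta>)"
    and nonneg: "\<And>\<theta> y. \<theta> \<in> \<Theta> \<Longrightarrow> 0 \<le> V \<theta> y \<and> 0 \<le> Vb \<theta> y \<and> 0 \<le> U \<theta> y \<and> 0 \<le> Ub \<theta> y"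
    (* H1 (a) *)
    and integrable: "\<And>\<theta>. \<theta> \<in> \<Theta> \<Longrightarrow>
        integrable lborel (\<lambda>y. exp (- V \<theta> y - U \<theta> y)) \<and>
        integrable lborel (\<lambda>y. exp (- Vb \<theta> y - Ub \<theta> y))"
    and int_pos: "0 < min (INF \<theta>\<in>\<Theta>. LINT y|lborel. exp (- V \<theta> y - U \<theta> y))
                          (INF \<theta>\<in>\<Theta>. LINT y|lborel. exp (- Vb \<theta> y - Ub \<theta> y))"
    (* H1 (b) *)
    and L_pos: "0 < L"
    and gradV: "\<And>\<theta> y. \<theta> \<in> \<Theta> \<Longrightarrow> (V \<theta> has_derivative (\<lambda>h. gV \<theta> y \<bullet> h)) (at y)"
    and gradVb: "\<And>\<theta> y. \<theta> \<in> \<Theta> \<Longrightarrow> (Vb \<theta> has_derivative (\<lambda>h. gVb \<theta> y \<bullet> h)) (at y)"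
    and gradV_lip: "\<And>\<theta>. \<theta> \<in> \<Theta> \<Longrightarrow> L-lipschitz_on UNIV (gV \<theta>) \<and> L-lipschitz_on UNIV (gVb \<theta>)"
    and minV: "\<And>\<theta>. \<theta> \<in> \<Theta> \<Longrightarrow>
        \<exists>xs. norm xs \<le> RV1 \<and> (\<forall>y. V \<theta> xs \<le> V \<theta> y) \<and> \<bar>V \<theta> xs\<bar> \<le> RV2"
    and minVb: "\<And>\<theta>. \<theta> \<in> \<Theta> \<Longrightarrow>
        \<exists>xs. norm xs \<le> RV1 \<and> (\<forall>y. Vb \<theta> xs \<le> Vb \<theta> y) \<and> \<bar>Vb \<theta> xs\<bar> \<le> RV2"
    (* H1 (c) *)
    and U_lip: "\<And>\<theta>. \<theta> \<in> \<Theta> \<Longrightarrow> M-lipschitz_on UNIV (U \<theta>) \<and> M-lipschitz_on UNIV (Ub \<theta>)"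
    and sharpU: "\<And>\<theta>. \<theta> \<in> \<Theta> \<Longrightarrow> \<exists>xs. norm xs \<le> RU1 \<and> \<bar>U \<theta> xs\<bar> \<le> RU2"
    and sharpUb: "\<And>\<theta>. \<theta> \<in> \<Theta> \<Longrightarrow> \<exists>xs. norm xs \<le> RU1 \<and> \<bar>Ub \<theta> xs\<bar> \<le> RU2"
    (* H3 *)
    and eta_pos: "0 < \<eta>" and c_nonneg: "0 \<le> c"
    and H3: "\<And>\<theta> y. \<theta> \<in> \<Theta> \<Longrightarrow> min (U \<theta> y) (Ub \<theta> y) \<ge> \<eta> * norm y - c"
    (* parameters of the lemma *)
    and kappa_pos: "0 < \<kappa>" and theta_in: "\<theta> \<in> \<Theta>"
    and gb_lt: "\<gamma>b < 2 / L" and gamma_pos: "0 < \<gamma>" and gamma_le: "\<gamma> \<le> \<gamma>b"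
  shows "(norm (prox (\<gamma> * \<kappa>) (U \<theta>) x - \<gamma> *\<^sub>R gV \<theta> (prox (\<gamma> * \<kappa>) (U \<theta>) x)))\<^sup>2
         \<le> (norm x)\<^sup>2 + \<gamma> * (3 * \<gamma>b * \<kappa>\<^sup>2 * M\<^sup>2 + 2 * \<kappa> * c + 2 * \<kappa> * (RU2 + M * RU1)
              + inverse (2 / L - \<gamma>b) * RV1\<^sup>2 - 2 * \<kappa> * \<eta> * norm x)"
proof -
  define lam where "lam = \<gamma> * \<kappa>"
  define p where "p = prox lam (U \<theta>) x"
  have lam: "0 < lam"
    using gamma_pos kappa_pos by (simp add: lam_def)
  obtain xu where xu: "norm xu \<le> RU1" "\<bar>U \<theta> xu\<bar> \<le> RU2"
    using sharpU[OF theta_in] by blast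
  obtain xv where xv: "norm xv \<le> RV1" "\<And>y. V \<theta> xv \<le> V \<theta> y"
    using minV[OF theta_in] by blast
  have U: "convex_on UNIV (U \<theta>)" "M-lipschitz_on UNIV (U \<theta>)"
    using convex[OF theta_in] U_lip[OF theta_in] by auto
  have V: "convex_on UNIV (V \<theta>)" "L-lipschitz_on UNIV (gV \<theta>)"
    using convex[OF theta_in] gradV_lip[OF theta_in] by auto
  have prox_step: "(norm p)\<^sup>2 \<le> (norm x)\<^sup>2 - 2 * lam * U \<theta> x + 2 * lam * (lam * M\<^sup>2 + RU2 + M * RU1)"
    unfolding p_def by (rule norm_prox_le[OF U lam xu])
  have gradient_step: "(norm (p - \<gamma> *\<^sub>R gV \<theta> p))\<^sup>2 \<le> (norm p)\<^sup>2 + \<gamma> * (RV1\<^sup>2 / (2 / L - \<gamma>b))"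
    by (rule norm_gradient_step_le[OF V(1) gradV[OF theta_in] V(2) L_pos xv(2) xv(1) gamma_pos gamma_le gb_lt])
  have "2 * lam * (\<eta> * norm x - c) \<le> 2 * lam * U \<theta> x"
    using H3[OF theta_in, of x] lam by simp
  moreover have "2 * lam * (lam * M\<^sup>2) \<le> \<gamma> * (3 * \<gamma>b * \<kappa>\<^sup>2 * M\<^sup>2)"
  proof -
    have "2 * lam * (lam * M\<^sup>2) = \<gamma> * (2 * \<gamma> * \<kappa>\<^sup>2 * M\<^sup>2)"
      by (simp add: lam_def power2_eq_square)
    also have "\<dots> \<le> \<gamma> * (3 * \<gamma>b * \<kappa>\<^sup>2 * M\<^sup>2)"
      using gamma_pos gamma_le by (intro mult_left_mono mult_right_mono) auto
    finally show ?thesis .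
  qed
  ultimately show ?thesis
    using prox_step gradient_step unfolding lam_def p_def by (simp add: algebra_simps divide_inverse)
qed

end
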